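(* Let $S>0$, $T>0$, $\sigma_{LN}>0$ and let $C:=\mathrm{BS}(S,S,T,\sigma_{LN})$ be the at-the-money ($K=S$) Black–Scholes call price with zero interest rate, where $\mathrm{BS}(S,K,T,\sigma)=S\,\mathcal N(d_+)-K\,\mathcal N(d_-)$, $d_\pm=\frac{\ln(S/K)\pm\sigma^2T/2}{\sigma\sqrt T}$, $\mathcal N$ the standard normal distribution function. Define $\eta_0:=1$ and, for $k\ge1$, $\eta_k:=\sum_{j=0}^{k-1}\frac{\eta_j\,\eta_{k-1-j}}{(j+1)(2j+1)}$. Then $$\sigma_{LN}=\sqrt{\frac{2\pi}{T}}\,\frac CS\sum_{k=0}^\infty\frac{\pi^k\eta_k}{4^k(2k+1)}\Big(\frac CS\Big)^{2k}.$$ *)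

theory Defs
  imports "HOL-Probability.Probability"
begin

definition Phi :: "real \<Rightarrow> real" where
  "Phi x = cdf (density lborel std_normal_density) x"

definition d_plus :: "real \<Rightarrow> real \<Rightarrow> real \<Rightarrow> real \<Rightarrow> real" where
  "d_plus S K T \<sigma> = (ln (S / K) + \<sigma>\<^sup>2 * T / 2) / (\<sigma> * sqrt T)"

definition d_minus :: "real \<Rightarrow> real \<Rightarrow> real \<Rightarrow> real \<Rightarrow> real" where
  "d_minus S K T \<sigma> = (ln (S / K) - \<sigma>\<^sup>2 * T / 2) / (\<sigma> * sqrt T)"

definition BS :: "real \<Rightarrow> real \<Rightarrow> real \<Rightarrow> real \<Rightarrow> real" where
  "BS S K T \<sigma> = S * Phi (d_plus S K T \<sigma>) - K * Phi (d_minus S K T \<sigma>)"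

function eta :: "nat \<Rightarrow> real" where
  "eta 0 = 1"
| "eta (Suc k) = (\<Sum>j<Suc k. eta j * eta (k - j) / (real (j + 1) * real (2 * j + 1)))"
  by pat_completeness auto
termination by (relation "Wellfounded.measure id") auto

end

theory Submission
  imports Defs
begin

(*
  Put y = \<sigma> sqrt T / 2, so that C / S = \<Phi>(y) - \<Phi>(-y) = Phi_sym y, and let c(t) = \<Sum> c\<^sub>k t\<^sup>k with
  c\<^sub>k = \<eta>\<^sub>k (\<pi>/4)\<^sup>k / (2k+1), and b(t) = c(t) + 2t c'(t) = \<Sum> (2k+1) c\<^sub>k t\<^sup>k.
  The recursion defining \<eta> is equivalent to the Riccati equation b' = (\<pi>/4) c b\<^sup>2 of formal
  power series, which makes b(t) exp(-(\<pi>/4) t c(t)\<^sup>2) constant; this is precisely the statement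
  that x \<mapsto> Phi_sym (sqrt(\<pi>/2) x c(x\<^sup>2)) has derivative 1, so sqrt(\<pi>/2) z c(z\<^sup>2) inverts Phi_sym.
  Convergence at z = Phi_sym y comes from the same monotonicity argument applied to the
  truncations of c, which satisfy the Riccati equation only as an inequality: inverting Phi_sym
  then bounds their values at z\<^sup>2.
*)

lemma Phi_diff_eq_integral:
  assumes "v \<le> x"
  shows "Phi x - Phi v = (LBINT y=v..x. std_normal_density y)"
proof (cases "v = x")
  case False
  with assms have vx: "v < x" by simp
  interpret real_distribution "density lborel std_normal_density"
    by (rule real_dist_normal_dist)
  have "Phi x - Phi v = measure (density lborel std_normal_density) {v<..x}"
    unfolding Phi_def using cdf_diff_eq[OF vx] by simp
  also have "\<dots> = integral\<^sup>L lborel (\<lambda>y. std_normal_density y *\<^sub>R indicator {v<..x} y)"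
    by (subst integral_density[symmetric]) (auto simp: normal_density_nonneg)
  also have "\<dots> = (LBINT y : {v<..x}. std_normal_density y)"
    by (simp add: set_lebesgue_integral_def mult.commute)
  also have "\<dots> = (LBINT y=v..x. std_normal_density y)"
    using vx by (simp add: interval_integral_Ioc)
  finally show ?thesis .
qed simp

lemma Phi_has_real_derivative: "(Phi has_real_derivative std_normal_density x) (at x)"
proof -
  have "continuous_on {x-1..x+1} std_normal_density"
    unfolding std_normal_density_def by (intro continuous_intros) auto
  then have "((\<lambda>u. LBINT y=x-1..u. std_normal_density y) has_vector_derivative std_normal_density x)
      (at x within {x-1..x+1})"
    by (intro interval_integral_FTC2) auto
  then have "((\<lambda>u. Phi (x-1) + (LBINT y=x-1..u. std_normal_density y)) has_vector_derivative
      std_normal_density x) (at x within {x-1..x+1})"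
    by (auto intro!: derivative_eq_intros)
  then have "(Phi has_vector_derivative std_normal_density x) (at x within {x-1..x+1})"
    by (rule has_vector_derivative_transform[rotated 2]) (auto simp: Phi_diff_eq_integral[symmetric])
  then show ?thesis
    by (simp add: at_within_Icc_at has_real_derivative_iff_has_vector_derivative)
qed

(* Phi_sym y = P(|X| \<le> y) = erf (y / sqrt 2) for a standard normal X. *)
definition Phi_sym :: "real \<Rightarrow> real" where
  "Phi_sym y = Phi y - Phi (- y)"

lemma Phi_sym_0 [simp]: "Phi_sym 0 = 0"
  by (simp add: Phi_sym_def)

lemma Phi_sym_has_real_derivative:
  "(Phi_sym has_real_derivative sqrt (2 / pi) * exp (- (y\<^sup>2) / 2)) (at y)"
proof -
  have "(Phi_sym has_real_derivative std_normal_density y + std_normal_density (- y)) (at y)"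
    unfolding Phi_sym_def
    by (auto intro!: derivative_eq_intros Phi_has_real_derivative[THEN DERIV_chain2])
  moreover have "std_normal_density y + std_normal_density (- y) = sqrt (2 / pi) * exp (- (y\<^sup>2) / 2)"
    by (simp add: std_normal_density_def real_sqrt_divide real_sqrt_mult field_simps)
  ultimately show ?thesis by simp
qed

lemma strict_mono_Phi_sym: "strict_mono Phi_sym"
proof (rule strict_monoI)
  fix x y :: real
  assume "x < y"
  then show "Phi_sym x < Phi_sym y"
    by (rule DERIV_pos_imp_increasing) (auto intro!: Phi_sym_has_real_derivative exI)
qed

lemma Phi_sym_pos: "0 < y \<Longrightarrow> 0 < Phi_sym y"
  using strict_mono_Phi_sym by (metis Phi_sym_0 strict_mono_less)

lemma eta_nonneg: "0 \<le> eta k"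
proof (induction k rule: less_induct)
  case (less k)
  show ?case
  proof (cases k)
    case (Suc m)
    show ?thesis
      unfolding Suc eta.simps
      by (intro sum_nonneg divide_nonneg_nonneg mult_nonneg_nonneg) (auto intro: less simp: Suc)
  qed simp
qed

definition eta_fps :: "real \<Rightarrow> real fps" where
  "eta_fps q = Abs_fps (\<lambda>k. eta k * q ^ k)"

definition eta_odd_fps :: "real \<Rightarrow> real fps" where
  "eta_odd_fps q = Abs_fps (\<lambda>k. eta k * q ^ k / real (2 * k + 1))"

lemma eta_fps_nonneg: "0 \<le> q \<Longrightarrow> 0 \<le> fps_nth (eta_fps q) k"
  by (simp add: eta_fps_def eta_nonneg)

lemma eta_odd_fps_nonneg: "0 \<le> q \<Longrightarrow> 0 \<le> fps_nth (eta_odd_fps q) k"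
  by (simp add: eta_odd_fps_def eta_nonneg)

lemma fps_nth_add_2X_deriv:
  fixes f :: "'a::comm_ring_1 fps"
  shows "fps_nth (f + 2 * fps_X * fps_deriv f) n = (2 * of_nat n + 1) * fps_nth f n"
  by (cases n) (simp_all add: numeral_fps_const algebra_simps)

lemma eta_fps_eq_eta_odd_fps:
  "eta_fps q = eta_odd_fps q + 2 * fps_X * fps_deriv (eta_odd_fps q)"
  by (rule fps_ext, subst fps_nth_add_2X_deriv) (simp add: eta_fps_def eta_odd_fps_def field_simps)

(* The recursion defining eta, read as an identity between coefficients. *)
lemma eta_fps_mult_inverse:
  "eta_fps q * (1 - fps_const q * fps_integral0 (eta_odd_fps q)) = 1"
proof (rule fps_ext)
  fix n
  show "fps_nth (eta_fps q * (1 - fps_const q * fps_integral0 (eta_odd_fps q))) n = fps_nth 1 n"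
  proof (cases n)
    case 0
    then show ?thesis by (simp add: eta_fps_def)
  next
    case (Suc k)
    have "fps_nth (eta_fps q * fps_integral0 (eta_odd_fps q)) (Suc k)
        = (\<Sum>i\<le>k. eta i * q ^ i
            * (eta (k - i) * q ^ (k - i) / (real (Suc (k - i)) * real (2 * (k - i) + 1))))"
      by (simp add: fps_mult_nth sum.atLeast0_atMost_Suc atMost_atLeast0 Suc_diff_le eta_fps_def
          eta_odd_fps_def divide_inverse mult_ac)
    also have "\<dots> = q ^ k * (\<Sum>j\<le>k. eta j * eta (k - j) / (real (j + 1) * real (2 * j + 1)))"
      unfolding sum_distrib_left
      by (rule sum.reindex_bij_witness[where i="\<lambda>i. k - i" and j="\<lambda>i. k - i"])
         (auto simp: power_add[symmetric])
    also have "\<dots> = q ^ k * eta (Suc k)"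
      by (simp add: lessThan_Suc_atMost)
    finally show ?thesis
      using Suc by (simp add: eta_fps_def algebra_simps)
  qed
qed

lemma fps_deriv_eta_fps:
  "fps_deriv (eta_fps q) = fps_const q * eta_odd_fps q * eta_fps q ^ 2"
proof -
  let ?W = "eta_fps q" and ?U = "fps_integral0 (eta_odd_fps q)"
  have "fps_deriv (?W * (1 - fps_const q * ?U)) = 0"
    by (simp add: eta_fps_mult_inverse)
  then have "fps_deriv ?W * (1 - fps_const q * ?U) = fps_const q * eta_odd_fps q * ?W"
    by (simp add: fps_deriv_fps_integral algebra_simps)
  then have "fps_deriv ?W * (?W * (1 - fps_const q * ?U)) = fps_const q * eta_odd_fps q * ?W ^ 2"
    by (metis (no_types, lifting) mult.assoc mult.commute power2_eq_square)
  then show ?thesis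
    by (simp add: eta_fps_mult_inverse)
qed

lemma fps_conv_radius_cutoff [simp]: "fps_conv_radius (fps_cutoff n f) = \<infinity>"
proof -
  have "fps_conv_radius (fps_cutoff n f) = conv_radius (\<lambda>_. 0 :: 'a)"
    unfolding fps_conv_radius_def
    by (intro conv_radius_cong eventually_mono[OF eventually_ge_at_top[of n]]) auto
  then show ?thesis by simp
qed

lemma eval_fps_cutoff: "eval_fps (fps_cutoff n f) z = (\<Sum>k<n. fps_nth f k * z ^ k)"
  unfolding eval_fps_def by (subst suminf_finite[of "{..<n}"]) auto

lemma eval_fps_sign:
  fixes f :: "real fps"
  assumes "\<And>n. 0 \<le> s * fps_nth f n" and "0 \<le> t" and "t < fps_conv_radius f"
  shows "0 \<le> s * eval_fps f t"
proof -
  have "summable (\<lambda>n. fps_nth f n * t ^ n)"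
    using assms by (intro summable_fps) auto
  then have "(\<lambda>n. s * fps_nth f n * t ^ n) sums (s * eval_fps f t)"
    unfolding eval_fps_def mult.assoc by (intro sums_mult summable_sums)
  moreover have "0 \<le> s * fps_nth f n * t ^ n" for n
    using assms by simp
  ultimately show ?thesis
    by (rule sums_le[of "\<lambda>_. 0", OF _ sums_zero, rotated])
qed

lemma fps_conv_radius_2X [simp]:
  "fps_conv_radius (2 * fps_X :: 'a::{banach, real_normed_div_algebra} fps) = \<infinity>"
  using fps_conv_radius_mult[of 2 "fps_X :: 'a fps"] by simp

lemma fps_conv_radius_add_2X_deriv:
  fixes f :: "'a::{banach, real_normed_field} fps"
  shows "fps_conv_radius f \<le> fps_conv_radius (f + 2 * fps_X * fps_deriv f)"
proof -
  have "fps_conv_radius f \<le> fps_conv_radius (2 * fps_X * fps_deriv f)"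
    using fps_conv_radius_mult[of "2 * fps_X" "fps_deriv f"] fps_conv_radius_deriv[of f] by simp
  then show ?thesis
    using fps_conv_radius_add[of f "2 * fps_X * fps_deriv f"] by (simp add: min_def split: if_splits)
qed

lemma eval_fps_add_2X_deriv:
  fixes f :: "'a::{banach, real_normed_field} fps"
  assumes "norm z < fps_conv_radius f"
  shows "eval_fps (f + 2 * fps_X * fps_deriv f) z = eval_fps f z + 2 * z * eval_fps (fps_deriv f) z"
proof -
  have f': "norm z < fps_conv_radius (fps_deriv f)"
    using assms fps_conv_radius_deriv[of f] by order
  then have "norm z < fps_conv_radius (2 * fps_X * fps_deriv f)"
    using fps_conv_radius_mult[of "2 * fps_X" "fps_deriv f"] by simp
  moreover have "eval_fps (2 * fps_X :: 'a fps) z = 2 * z"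
    by (subst eval_fps_mult) auto
  ultimately show ?thesis
    using assms f' by (simp add: eval_fps_add eval_fps_mult)
qed

lemma eval_fps_riccati_defect:
  fixes b c :: "'a::{banach, real_normed_field} fps"
  assumes x: "norm x < fps_conv_radius c" and rad_b: "fps_conv_radius c \<le> fps_conv_radius b"
  shows "norm x < fps_conv_radius (fps_const q * c * b ^ 2 - fps_deriv b)"
    and "eval_fps (fps_const q * c * b ^ 2 - fps_deriv b) x
      = q * eval_fps c x * (eval_fps b x)\<^sup>2 - eval_fps (fps_deriv b) x"
proof -
  have xb: "norm x < fps_conv_radius b"
    using x rad_b by order
  have xb': "norm x < fps_conv_radius (fps_deriv b)"
    using xb fps_conv_radius_deriv[of b] by order
  have xqc: "norm x < fps_conv_radius (fps_const q * c)"
    using x fps_conv_radius_mult[of "fps_const q" c] by simp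
  have xb2: "norm x < fps_conv_radius (b ^ 2)"
    using xb fps_conv_radius_power[of b 2] by order
  have xqcb: "norm x < fps_conv_radius (fps_const q * c * b ^ 2)"
    using xqc xb2 fps_conv_radius_mult[of "fps_const q * c" "b ^ 2"] by (simp add: min_def split: if_splits)
  then show "norm x < fps_conv_radius (fps_const q * c * b ^ 2 - fps_deriv b)"
    using xb' fps_conv_radius_diff[of "fps_const q * c * b ^ 2" "fps_deriv b"]
    by (simp add: min_def split: if_splits)
  show "eval_fps (fps_const q * c * b ^ 2 - fps_deriv b) x
      = q * eval_fps c x * (eval_fps b x)\<^sup>2 - eval_fps (fps_deriv b) x"
    using xqcb xb' xqc xb2 x xb by (simp add: eval_fps_diff eval_fps_mult eval_fps_power)
qed

(* As b = c + 2 t c', the function r t = b(t) exp (- q t c(t)\<^sup>2) has derivative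
   exp (- q t c(t)\<^sup>2) (b' - q c b\<^sup>2), whose sign is controlled coefficientwise. *)
lemma riccati_comparison:
  fixes b c :: "real fps" and q s t :: real
  assumes b: "b = c + 2 * fps_X * fps_deriv c"
    and ineq: "\<And>k. 0 \<le> s * fps_nth (fps_const q * c * b ^ 2 - fps_deriv b) k"
    and t: "0 \<le> t" "t < fps_conv_radius c"
  shows "s * (eval_fps b t * exp (- q * t * (eval_fps c t)\<^sup>2)) \<le> s * fps_nth c 0"
proof -
  define r where "r x = eval_fps b x * exp (- q * x * (eval_fps c x)\<^sup>2)" for x
  have rad_b: "fps_conv_radius c \<le> fps_conv_radius b"
    unfolding b by (rule fps_conv_radius_add_2X_deriv)
  have Dr: "(r has_real_derivative
      exp (- q * x * (eval_fps c x)\<^sup>2) * (eval_fps (fps_deriv b) x - q * eval_fps c x * (eval_fps b x)\<^sup>2))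
      (at x)" if x: "norm x < fps_conv_radius c" for x
  proof -
    have xb: "norm x < fps_conv_radius b" using x rad_b by order
    have "eval_fps b x = eval_fps c x + 2 * x * eval_fps (fps_deriv c) x"
      unfolding b using x by (rule eval_fps_add_2X_deriv)
    then show ?thesis
      unfolding r_def
      by (auto intro!: derivative_eq_intros has_field_derivative_eval_fps x xb
          simp: algebra_simps power2_eq_square)
  qed
  have "s * r t \<le> s * r 0"
  proof (rule DERIV_nonpos_imp_nonincreasing[OF t(1)])
    fix x assume x: "0 \<le> x" "x \<le> t"
    then have xc: "norm x < fps_conv_radius c"
      using t by (metis abs_of_nonneg ereal_less_eq(3) order_le_less_trans real_norm_def)
    have "0 \<le> s * (q * eval_fps c x * (eval_fps b x)\<^sup>2 - eval_fps (fps_deriv b) x)"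
      using eval_fps_sign[OF ineq x(1)] eval_fps_riccati_defect[OF xc rad_b] x by simp
    then have "0 \<le> exp (- q * x * (eval_fps c x)\<^sup>2)
        * (s * (q * eval_fps c x * (eval_fps b x)\<^sup>2 - eval_fps (fps_deriv b) x))"
      by simp
    moreover have "s * (exp (- q * x * (eval_fps c x)\<^sup>2)
        * (eval_fps (fps_deriv b) x - q * eval_fps c x * (eval_fps b x)\<^sup>2))
      = - (exp (- q * x * (eval_fps c x)\<^sup>2)
        * (s * (q * eval_fps c x * (eval_fps b x)\<^sup>2 - eval_fps (fps_deriv b) x)))"
      by (simp add: algebra_simps)
    ultimately show "\<exists>y. ((\<lambda>x. s * r x) has_real_derivative y) (at x) \<and> y \<le> 0"
      by (metis DERIV_cmult Dr[OF xc] neg_le_0_iff_le)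
  qed
  moreover have "r 0 = fps_nth c 0"
    by (simp add: r_def b eval_fps_at_0)
  ultimately show ?thesis
    by (simp add: r_def)
qed

(* F x = Phi_sym (sqrt (pi / 2) x c(x\<^sup>2)) - x has derivative r(x\<^sup>2) - 1 for the r above;
   the sign s selects the direction of the resulting inequality. *)
lemma Phi_sym_comparison:
  fixes b c :: "real fps" and s z :: real
  assumes b: "b = c + 2 * fps_X * fps_deriv c"
    and ineq: "\<And>k. 0 \<le> s * fps_nth (fps_const (pi / 4) * c * b ^ 2 - fps_deriv b) k"
    and c0: "s * (fps_nth c 0 - 1) \<le> 0"
    and z: "0 \<le> z" "z\<^sup>2 < fps_conv_radius c"
  shows "s * (Phi_sym (sqrt (pi / 2) * z * eval_fps c (z\<^sup>2)) - z) \<le> 0"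
proof -
  define F where "F x = Phi_sym (sqrt (pi / 2) * x * eval_fps c (x\<^sup>2)) - x" for x
  have in_disc: "ereal (x\<^sup>2) < fps_conv_radius c" if "0 \<le> x" "x \<le> z" for x
  proof -
    have "ereal (x\<^sup>2) \<le> ereal (z\<^sup>2)"
      using that by (simp add: power_mono)
    then show ?thesis
      using z(2) by order
  qed
  have DF: "(F has_real_derivative
      eval_fps b (x\<^sup>2) * exp (- (pi / 4) * x\<^sup>2 * (eval_fps c (x\<^sup>2))\<^sup>2) - 1) (at x)"
    if x: "0 \<le> x" "x \<le> z" for x
  proof -
    have xc: "norm (x\<^sup>2) < fps_conv_radius c"
      using in_disc[OF x] by simp
    have Dc: "((\<lambda>x. eval_fps c (x\<^sup>2)) has_real_derivative eval_fps (fps_deriv c) (x\<^sup>2) * (2 * x)) (at x)"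
    proof -
      have "((\<lambda>x. x\<^sup>2) has_real_derivative 2 * x) (at x)"
        by (auto intro!: derivative_eq_intros)
      then show ?thesis
        by (rule DERIV_chain2[where g="\<lambda>x. x\<^sup>2", OF has_field_derivative_eval_fps[OF xc]])
    qed
    have "(F has_real_derivative sqrt (2 / pi) * exp (- ((sqrt (pi / 2) * x * eval_fps c (x\<^sup>2))\<^sup>2) / 2)
        * (sqrt (pi / 2) * (eval_fps c (x\<^sup>2) + x * (eval_fps (fps_deriv c) (x\<^sup>2) * (2 * x)))) - 1) (at x)"
      unfolding F_def
      by (rule DERIV_cong, (rule derivative_eq_intros Phi_sym_has_real_derivative[THEN DERIV_chain2] Dc refl)+)
         (simp add: algebra_simps)
    moreover have "sqrt (2 / pi) * exp (- ((sqrt (pi / 2) * x * eval_fps c (x\<^sup>2))\<^sup>2) / 2)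
        * (sqrt (pi / 2) * (eval_fps c (x\<^sup>2) + x * (eval_fps (fps_deriv c) (x\<^sup>2) * (2 * x))))
        = eval_fps b (x\<^sup>2) * exp (- (pi / 4) * x\<^sup>2 * (eval_fps c (x\<^sup>2))\<^sup>2)"
    proof -
      have e: "- ((sqrt (pi / 2) * x * eval_fps c (x\<^sup>2))\<^sup>2) / 2 = - (pi / 4) * x\<^sup>2 * (eval_fps c (x\<^sup>2))\<^sup>2"
        by (simp add: power_mult_distrib)
      have w: "eval_fps c (x\<^sup>2) + x * (eval_fps (fps_deriv c) (x\<^sup>2) * (2 * x)) = eval_fps b (x\<^sup>2)"
        unfolding b eval_fps_add_2X_deriv[OF xc] by (simp add: power2_eq_square mult_ac)
      have "sqrt (2 / pi) * sqrt (pi / 2) = 1"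
        by (simp flip: real_sqrt_mult)
      then show ?thesis
        unfolding e w by (simp add: algebra_simps)
    qed
    ultimately show ?thesis
      by simp
  qed
  have "s * F z \<le> s * F 0"
  proof (rule DERIV_nonpos_imp_nonincreasing[OF z(1)])
    fix x assume x: "0 \<le> x" "x \<le> z"
    have "s * (eval_fps b (x\<^sup>2) * exp (- (pi / 4) * x\<^sup>2 * (eval_fps c (x\<^sup>2))\<^sup>2)) \<le> s * fps_nth c 0"
      using x in_disc[OF x] by (intro riccati_comparison[OF b ineq]) auto
    then have "s * (eval_fps b (x\<^sup>2) * exp (- (pi / 4) * x\<^sup>2 * (eval_fps c (x\<^sup>2))\<^sup>2) - 1) \<le> 0"
      using c0 by (simp add: algebra_simps)
    then show "\<exists>y. ((\<lambda>x. s * F x) has_real_derivative y) (at x) \<and> y \<le> 0"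
      using DERIV_cmult[OF DF[OF x], of s] by blast
  qed
  then show ?thesis
    by (simp add: F_def)
qed

lemma fps_nth_mult_nonneg:
  fixes f g :: "'a::linordered_semiring_strict fps"
  assumes "\<And>n. 0 \<le> fps_nth f n" and "\<And>n. 0 \<le> fps_nth g n"
  shows "0 \<le> fps_nth (f * g) n"
  unfolding fps_mult_nth using assms by (intro sum_nonneg mult_nonneg_nonneg)

lemma fps_cutoff_add_2X_deriv:
  fixes f :: "'a::comm_ring_1 fps"
  shows "fps_cutoff n (f + 2 * fps_X * fps_deriv f)
    = fps_cutoff n f + 2 * fps_X * fps_deriv (fps_cutoff n f)"
  by (rule fps_ext) (simp only: fps_nth_add_2X_deriv fps_cutoff_nth, simp)

lemma fps_nth_cutoff_mult_power2:
  fixes f g :: "'a::comm_semiring_1 fps"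
  assumes "k < n"
  shows "fps_nth (fps_cutoff n f * fps_cutoff n g ^ 2) k = fps_nth (f * g ^ 2) k"
proof -
  have "fps_nth (fps_cutoff n f * fps_cutoff n g ^ 2) k = fps_nth (f * fps_cutoff n g ^ 2) k"
    by (rule fps_cutoff_left_mult_nth[OF assms])
  also have "\<dots> = fps_nth (fps_cutoff n g * (fps_cutoff n g * f)) k"
    by (simp add: power2_eq_square mult_ac)
  also have "\<dots> = fps_nth (g * (fps_cutoff n g * f)) k"
    by (rule fps_cutoff_left_mult_nth[OF assms])
  also have "\<dots> = fps_nth (g * f * fps_cutoff n g) k"
    by (simp add: mult_ac)
  also have "\<dots> = fps_nth (g * f * g) k"
    by (rule fps_cutoff_right_mult_nth[OF assms])
  also have "\<dots> = fps_nth (f * g ^ 2) k"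
    by (simp add: power2_eq_square mult_ac)
  finally show ?thesis .
qed

lemma fps_cutoff_riccati_supersolution:
  fixes b c :: "real fps"
  assumes ode: "fps_deriv b = fps_const q * c * b ^ 2"
    and nonneg: "0 \<le> q" "\<And>k. 0 \<le> fps_nth b k" "\<And>k. 0 \<le> fps_nth c k"
  shows "0 \<le> fps_nth (fps_const q * fps_cutoff n c * fps_cutoff n b ^ 2 - fps_deriv (fps_cutoff n b)) k"
proof (cases "Suc k < n")
  case True
  then have "fps_nth (fps_deriv (fps_cutoff n b)) k = fps_nth (fps_const q * c * b ^ 2) k"
    by (simp flip: ode)
  also have "\<dots> = fps_nth (fps_const q * fps_cutoff n c * fps_cutoff n b ^ 2) k"
    using True by (simp add: mult.assoc fps_nth_cutoff_mult_power2)
  finally show ?thesis by simp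
next
  case False
  have "0 \<le> fps_nth (fps_cutoff n c * fps_cutoff n b ^ 2) k"
    using nonneg by (intro fps_nth_mult_nonneg) (simp_all add: power2_eq_square fps_nth_mult_nonneg)
  with False nonneg(1) show ?thesis
    by (simp add: mult.assoc)
qed

lemma fps_conv_radius_eta_odd_fps_ge:
  assumes "0 < y"
  shows "ereal ((Phi_sym y)\<^sup>2) \<le> fps_conv_radius (eta_odd_fps (pi / 4))"
proof -
  define c where "c = eta_odd_fps (pi / 4)"
  define z where "z = Phi_sym y"
  have z: "0 < z"
    unfolding z_def using assms by (rule Phi_sym_pos)
  have partial_sums: "(\<Sum>k<N. fps_nth c k * (z\<^sup>2) ^ k) \<le> y / (sqrt (pi / 2) * z)" for N
  proof -
    have "1 * (Phi_sym (sqrt (pi / 2) * z * eval_fps (fps_cutoff N c) (z\<^sup>2)) - z) \<le> 0"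
    proof (rule Phi_sym_comparison)
      show "fps_cutoff N (eta_fps (pi / 4)) = fps_cutoff N c + 2 * fps_X * fps_deriv (fps_cutoff N c)"
        unfolding c_def eta_fps_eq_eta_odd_fps by (rule fps_cutoff_add_2X_deriv)
      show "0 \<le> 1 * fps_nth (fps_const (pi / 4) * fps_cutoff N c * fps_cutoff N (eta_fps (pi / 4)) ^ 2
          - fps_deriv (fps_cutoff N (eta_fps (pi / 4)))) k" for k
        unfolding c_def mult_1
        by (rule fps_cutoff_riccati_supersolution[OF fps_deriv_eta_fps])
           (simp_all add: eta_fps_nonneg eta_odd_fps_nonneg)
    qed (use z in \<open>simp_all add: c_def eta_odd_fps_def\<close>)
    then have "Phi_sym (sqrt (pi / 2) * z * eval_fps (fps_cutoff N c) (z\<^sup>2)) \<le> Phi_sym y"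
      by (simp add: z_def)
    then have "sqrt (pi / 2) * z * eval_fps (fps_cutoff N c) (z\<^sup>2) \<le> y"
      by (simp add: strict_mono_less_eq[OF strict_mono_Phi_sym])
    then show ?thesis
      using z by (simp add: eval_fps_cutoff field_simps)
  qed
  have "summable (\<lambda>k. fps_nth c k * (z\<^sup>2) ^ k)"
    by (rule summableI_nonneg_bounded[OF _ partial_sums]) (simp add: c_def eta_odd_fps_nonneg)
  then show ?thesis
    using conv_radius_geI by (fastforce simp: fps_conv_radius_def c_def z_def)
qed

lemma Phi_sym_inverse_series:
  assumes "0 < y"
  shows "(Phi_sym y)\<^sup>2 < fps_conv_radius (eta_odd_fps (pi / 4))"
    and "sqrt (pi / 2) * Phi_sym y * eval_fps (eta_odd_fps (pi / 4)) ((Phi_sym y)\<^sup>2) = y"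
proof -
  define c where "c = eta_odd_fps (pi / 4)"
  define z where "z = Phi_sym y"
  have z: "0 \<le> z"
    unfolding z_def using Phi_sym_pos[OF assms] by simp
  have "z < Phi_sym (y + 1)"
    unfolding z_def by (simp add: strict_mono_less[OF strict_mono_Phi_sym])
  then have "ereal (z\<^sup>2) < ereal ((Phi_sym (y + 1))\<^sup>2)"
    using z by (simp add: power_strict_mono)
  also have "\<dots> \<le> fps_conv_radius c"
    unfolding c_def using assms by (intro fps_conv_radius_eta_odd_fps_ge) simp
  finally have radius: "z\<^sup>2 < fps_conv_radius c" .
  then show "(Phi_sym y)\<^sup>2 < fps_conv_radius (eta_odd_fps (pi / 4))"
    by (simp add: c_def z_def)
  have both_sides: "s * (Phi_sym (sqrt (pi / 2) * z * eval_fps c (z\<^sup>2)) - z) \<le> 0" for s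
    using z radius unfolding c_def
    by (intro Phi_sym_comparison[OF eta_fps_eq_eta_odd_fps])
       (simp_all add: fps_deriv_eta_fps eta_odd_fps_def)
  then have "Phi_sym (sqrt (pi / 2) * z * eval_fps c (z\<^sup>2)) = Phi_sym y"
    using both_sides[of 1] both_sides[of "-1"] by (simp add: z_def)
  then show "sqrt (pi / 2) * Phi_sym y * eval_fps (eta_odd_fps (pi / 4)) ((Phi_sym y)\<^sup>2) = y"
    using strict_mono_eq[OF strict_mono_Phi_sym] by (simp add: c_def z_def)
qed

lemma Phi_sym_inverse_sums:
  assumes "0 < y"
  shows "(\<lambda>k. pi ^ k * eta k / (4 ^ k * real (2 * k + 1)) * Phi_sym y ^ (2 * k))
    sums (y / (sqrt (pi / 2) * Phi_sym y))"
proof -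
  let ?c = "eta_odd_fps (pi / 4)"
  have "(\<lambda>k. pi ^ k * eta k / (4 ^ k * real (2 * k + 1)) * Phi_sym y ^ (2 * k))
      = (\<lambda>k. fps_nth ?c k * ((Phi_sym y)\<^sup>2) ^ k)"
    by (simp only: power_mult) (simp add: eta_odd_fps_def power_divide mult_ac)
  moreover have "(\<lambda>k. fps_nth ?c k * ((Phi_sym y)\<^sup>2) ^ k) sums eval_fps ?c ((Phi_sym y)\<^sup>2)"
    using Phi_sym_inverse_series(1)[OF assms] by (intro sums_eval_fps) simp
  moreover have "eval_fps ?c ((Phi_sym y)\<^sup>2) = y / (sqrt (pi / 2) * Phi_sym y)"
    using Phi_sym_inverse_series(2)[OF assms] Phi_sym_pos[OF assms] by (simp add: field_simps)
  ultimately show ?thesis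
    by simp
qed

lemma BS_at_the_money:
  assumes "0 < S" and "0 < T" and "0 < \<sigma>"
  shows "BS S S T \<sigma> / S = Phi_sym (\<sigma> * sqrt T / 2)"
proof -
  have "sqrt T * sqrt T = T"
    using assms by simp
  then have d: "d_plus S S T \<sigma> = \<sigma> * sqrt T / 2" "d_minus S S T \<sigma> = - (\<sigma> * sqrt T / 2)"
    using assms by (simp_all add: d_plus_def d_minus_def field_simps power2_eq_square)
  show ?thesis
    unfolding BS_def Phi_sym_def d using assms by (simp add: field_simps)
qed

theorem proposition6:
  fixes S T \<sigma>LN :: real
  assumes "S > 0" and "T > 0" and "\<sigma>LN > 0"
  defines "C \<equiv> BS S S T \<sigma>LN"
  shows "summable (\<lambda>k. pi ^ k * eta k / (4 ^ k * real (2 * k + 1)) * (C / S) ^ (2 * k))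
    \<and> \<sigma>LN = sqrt (2 * pi / T) * (C / S) *
        (\<Sum>k. pi ^ k * eta k / (4 ^ k * real (2 * k + 1)) * (C / S) ^ (2 * k))"
proof -
  define y where "y = \<sigma>LN * sqrt T / 2"
  have y: "0 < y"
    using assms by (simp add: y_def)
  have CS: "C / S = Phi_sym y"
    unfolding C_def y_def using assms(1-3) by (rule BS_at_the_money)
  have "sqrt (2 * pi / T) = sqrt (2\<^sup>2 * (pi / 2) / T)"
    by simp
  also have "\<dots> = 2 / sqrt T * sqrt (pi / 2)"
    by (simp only: real_sqrt_divide real_sqrt_mult real_sqrt_abs abs_numeral times_divide_eq_left)
  finally have "\<sigma>LN = sqrt (2 * pi / T) * (C / S) * (y / (sqrt (pi / 2) * (C / S)))"
    using assms(2) Phi_sym_pos[OF y] by (simp add: CS y_def)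
  then show ?thesis
    using Phi_sym_inverse_sums[OF y] by (simp add: CS sums_iff)
qed

end
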